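(* Let $\mathfrak W=(W_s)_{s\in\mathcal S}$ be an arbitrarily varying channel with input alphabet $\mathcal A$, output alphabet $\mathcal B$ and finite state set $\mathcal S$. Let $T\in C(\mathcal A',\mathcal A)$ be a channel, and let $\mathfrak W'$ be the arbitrarily varying channel with input alphabet $\mathcal A'$, output alphabet $\mathcal B$ and state set $\mathcal S$ given by $w'(b|a',s):=\sum_{a\in\mathcal A}w(b|a,s)t(a|a')$ (i.e. $W'_s=W_s\circ T$). If $\mathfrak W$ is symmetrizable, then $\mathfrak W'$ is symmetrizable.
   Context: All sets are finite. $C(\mathcal A,\mathcal B)$ is the set of channels (stochastic matrices $w(b|a)$) from $\mathcal A$ to $\mathcal B$; $w(b|a,s)$ denotes the transition probability of $W_s$. An arbitrarily varying channel $(W_s)_{s\in\mathcal S}$ with input alphabet $\mathcal A$ is symmetrizable if there is $U\in C(\mathcal A,\mathcal S)$ with $\sum_su(s|a)w(b|a',s)=\sum_su(s|a')w(b|a,s)$ for all $a,a'\in\mathcal A$, $b\in\mathcal B$. *)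

theory Defs
  imports Main "HOL-Analysis.Analysis"
begin

text \<open>A channel from 'a to 'b: stochastic matrix w(b|a), written w b a.\<close>
definition channel :: "('b::finite \<Rightarrow> 'a::finite \<Rightarrow> real) \<Rightarrow> bool" where
  "channel w \<longleftrightarrow> (\<forall>a b. 0 \<le> w b a) \<and> (\<forall>a. (\<Sum>b\<in>UNIV. w b a) = 1)"

definition avc :: "('b::finite \<Rightarrow> 'a::finite \<Rightarrow> 's::finite \<Rightarrow> real) \<Rightarrow> bool" where
  "avc w \<longleftrightarrow> (\<forall>s. channel (\<lambda>b a. w b a s))"

definition symmetrizable :: "('b::finite \<Rightarrow> 'a::finite \<Rightarrow> 's::finite \<Rightarrow> real) \<Rightarrow> bool" where
  "symmetrizable w \<longleftrightarrow> (\<exists>u :: 's \<Rightarrow> 'a \<Rightarrow> real. channel u \<and>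
     (\<forall>a a' b. (\<Sum>s\<in>UNIV. u s a * w b a' s) = (\<Sum>s\<in>UNIV. u s a' * w b a s)))"

end

theory Submission
  imports Defs
begin

text \<open>If U symmetrizes (W_s), then U \<circ> T symmetrizes (W_s \<circ> T): expanding both compositions,
  the symmetrization condition for W \<circ> T at inputs x, y becomes the T(.|x) \<otimes> T(.|y)-average of
  the condition for W, which holds termwise; exchanging the two summation indices gives the
  required symmetry.\<close>

lemma channel_comp:
  fixes u :: "'c::finite \<Rightarrow> 'b::finite \<Rightarrow> real" and t :: "'b \<Rightarrow> 'a::finite \<Rightarrow> real"
  assumes "channel u" and "channel t"
  shows "channel (\<lambda>c a. \<Sum>b\<in>UNIV. u c b * t b a)"
  unfolding channel_def
proof (intro conjI allI)
  fix a c
  show "0 \<le> (\<Sum>b\<in>UNIV. u c b * t b a)"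
    using assms by (intro sum_nonneg) (simp add: channel_def)
next
  fix a
  have "(\<Sum>c\<in>UNIV. \<Sum>b\<in>UNIV. u c b * t b a) = (\<Sum>b\<in>UNIV. (\<Sum>c\<in>UNIV. u c b) * t b a)"
    by (subst sum.swap) (simp add: sum_distrib_right)
  also have "\<dots> = 1"
    using assms by (simp add: channel_def)
  finally show "(\<Sum>c\<in>UNIV. \<Sum>b\<in>UNIV. u c b * t b a) = 1" .
qed

lemma sum_states_comp_comp:
  fixes u :: "'s::finite \<Rightarrow> 'a::finite \<Rightarrow> real"
  shows "(\<Sum>s\<in>UNIV. (\<Sum>a\<in>UNIV. u s a * t a x) * (\<Sum>c\<in>UNIV. w b c s * t c y))
       = (\<Sum>a\<in>UNIV. \<Sum>c\<in>UNIV. t a x * t c y * (\<Sum>s\<in>UNIV. u s a * w b c s))"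
proof -
  have "(\<Sum>s\<in>UNIV. (\<Sum>a\<in>UNIV. u s a * t a x) * (\<Sum>c\<in>UNIV. w b c s * t c y))
      = (\<Sum>s\<in>UNIV. \<Sum>a\<in>UNIV. \<Sum>c\<in>UNIV. t a x * t c y * (u s a * w b c s))"
    by (simp add: sum_product mult_ac)
  also have "\<dots> = (\<Sum>a\<in>UNIV. \<Sum>s\<in>UNIV. \<Sum>c\<in>UNIV. t a x * t c y * (u s a * w b c s))"
    by (rule sum.swap)
  also have "\<dots> = (\<Sum>a\<in>UNIV. \<Sum>c\<in>UNIV. \<Sum>s\<in>UNIV. t a x * t c y * (u s a * w b c s))"
    by (intro sum.cong refl sum.swap)
  also have "\<dots> = (\<Sum>a\<in>UNIV. \<Sum>c\<in>UNIV. t a x * t c y * (\<Sum>s\<in>UNIV. u s a * w b c s))"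
    by (simp add: sum_distrib_left)
  finally show ?thesis .
qed

lemma symmetrizable_comp_input:
  fixes w :: "'b::finite \<Rightarrow> 'a::finite \<Rightarrow> 's::finite \<Rightarrow> real"
    and t :: "'a \<Rightarrow> 'a2::finite \<Rightarrow> real"
  assumes "symmetrizable w" and "channel t"
  shows "symmetrizable (\<lambda>b a' s. \<Sum>a\<in>UNIV. w b a s * t a a')"
proof -
  obtain u :: "'s \<Rightarrow> 'a \<Rightarrow> real" where u: "channel u"
    and sym: "\<And>a a' b. (\<Sum>s\<in>UNIV. u s a * w b a' s) = (\<Sum>s\<in>UNIV. u s a' * w b a s)"
    using assms(1) unfolding symmetrizable_def by blast
  have "(\<Sum>s\<in>UNIV. (\<Sum>a\<in>UNIV. u s a * t a x) * (\<Sum>c\<in>UNIV. w b c s * t c y))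
      = (\<Sum>s\<in>UNIV. (\<Sum>a\<in>UNIV. u s a * t a y) * (\<Sum>c\<in>UNIV. w b c s * t c x))" for x y b
  proof -
    have "(\<Sum>s\<in>UNIV. (\<Sum>a\<in>UNIV. u s a * t a x) * (\<Sum>c\<in>UNIV. w b c s * t c y))
        = (\<Sum>a\<in>UNIV. \<Sum>c\<in>UNIV. t a x * t c y * (\<Sum>s\<in>UNIV. u s c * w b a s))"
      by (simp add: sum_states_comp_comp sym)
    also have "\<dots> = (\<Sum>c\<in>UNIV. \<Sum>a\<in>UNIV. t c y * t a x * (\<Sum>s\<in>UNIV. u s c * w b a s))"
      by (subst sum.swap) (simp add: mult_ac)
    also have "\<dots> = (\<Sum>s\<in>UNIV. (\<Sum>a\<in>UNIV. u s a * t a y) * (\<Sum>c\<in>UNIV. w b c s * t c x))"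
      by (rule sum_states_comp_comp[symmetric])
    finally show ?thesis .
  qed
  with channel_comp[OF u assms(2)] show ?thesis
    unfolding symmetrizable_def by blast
qed

theorem lemma3:
  fixes w :: "'b::finite \<Rightarrow> 'a::finite \<Rightarrow> 's::finite \<Rightarrow> real"
    and t :: "'a \<Rightarrow> 'a2::finite \<Rightarrow> real"
  assumes "avc w" and "channel t" and "symmetrizable w"
  shows "symmetrizable (\<lambda>b a' s. \<Sum>a\<in>UNIV. w b a s * t a a')"
  using symmetrizable_comp_input[OF assms(3,2)] .

end
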